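(* Let $K\subset\mathbb{R}^3$ be finite, and let $(A^j)$ be the sequence of sets produced by the finitely extremal points elimination algorithm applied to $K$. Then for every $j$, every extremal point of $M^j=(A^j)^{hv}$ is a finitely extremal point of $A^j$.
   Context: Grid: let $F\subset\mathbb{R}^2$ be the projection of $K$ to the $(x,y)$-plane and $H$ the set of $z$-coordinates of points of $K$. The first derived set $F^1$ is the set of points of $\mathbb{R}^2\setminus F$ that are the single intersection point of two segments with endpoints in $F$. The grid is $G=(F\cup F^1)\times H$. hv-hull: for finite $A\subset\mathbb{R}^3$ with set of heights $h_1<\dots<h_m$ and $\pi$ the projection to the $(x,y)$-plane, $A^{h}=\bigcup_i co(A\cap\{z=h_i\})$ and $A^{hv}=A^h\cup\bigcup_{j}\big(\pi(co(A\cap\{z=h_j\}))\cap\pi(co(A\cap\{z=h_{j+1}\}))\big)\times[h_j,h_{j+1}]$. Finitely extremal: for finite $A$, a point $p\in A$ is $A$-finitely extremal if neither (i) there are $p_1,p_2\in A$ on the same vertical line (parallel to the $z$ axis) with $p$ in the relative interior of $[p_1,p_2]$, nor (ii) $p$ lies in the convex hull of $\{q\in A\setminus\{p\}: z(q)=z(p)\}$. Algorithm: set $A^0=G$; while the set of finitely extremal points of $A^k$ is not contained in $K$, choose a finitely extremal point $p_k$ of $A^k$ with $p_k\notin K$ and set $A^{k+1}=A^k\setminus\{p_k\}$. For $M\subset\mathbb{R}^3$, $p\in M$ is extremal if no relatively open horizontal (contained in a plane $\{z=c\}$) or vertical segment contained in $M$ contains $p$. *)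

theory Defs
  imports "HOL-Analysis.Analysis"
begin

text \<open>Points of R^3 are represented as ((x,y),z) :: (real \<times> real) \<times> real.
  The projection to the (x,y)-plane is fst, the height (z-coordinate) is snd.\<close>

type_synonym pt3 = "(real \<times> real) \<times> real"

definition grid_F :: "pt3 set \<Rightarrow> (real \<times> real) set" where
  "grid_F K = fst ` K"

definition grid_H :: "pt3 set \<Rightarrow> real set" where
  "grid_H K = snd ` K"

definition derived1 :: "(real \<times> real) set \<Rightarrow> (real \<times> real) set" where
  "derived1 F = {q. q \<notin> F \<and> (\<exists>a\<in>F. \<exists>b\<in>F. \<exists>c\<in>F. \<exists>d\<in>F.
       closed_segment a b \<inter> closed_segment c d = {q})}"

definition grid :: "pt3 set \<Rightarrow> pt3 set" where
  "grid K = (grid_F K \<union> derived1 (grid_F K)) \<times> grid_H K"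

definition slice :: "pt3 set \<Rightarrow> real \<Rightarrow> pt3 set" where
  "slice A h = {q \<in> A. snd q = h}"

definition h_hull :: "pt3 set \<Rightarrow> pt3 set" where
  "h_hull A = (\<Union>h\<in>snd ` A. convex hull (slice A h))"

definition hv_hull :: "pt3 set \<Rightarrow> pt3 set" where
  "hv_hull A = h_hull A \<union>
     (\<Union>{(fst ` (convex hull (slice A h1)) \<inter> fst ` (convex hull (slice A h2))) \<times> {h1..h2}
        | h1 h2. h1 \<in> snd ` A \<and> h2 \<in> snd ` A \<and> h1 < h2 \<and>
                 \<not> (\<exists>h\<in>snd ` A. h1 < h \<and> h < h2)})"

definition fin_extremal :: "pt3 set \<Rightarrow> pt3 \<Rightarrow> bool" where
  "fin_extremal A p \<longleftrightarrow> p \<in> A \<and>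
     \<not> (\<exists>p1\<in>A. \<exists>p2\<in>A. fst p1 = fst p2 \<and> p \<in> open_segment p1 p2) \<and>
     p \<notin> convex hull {q \<in> A - {p}. snd q = snd p}"

definition hv_extremal :: "pt3 set \<Rightarrow> pt3 \<Rightarrow> bool" where
  "hv_extremal M p \<longleftrightarrow> p \<in> M \<and>
     \<not> (\<exists>a b. a \<noteq> b \<and> (snd a = snd b \<or> fst a = fst b) \<and>
              open_segment a b \<subseteq> M \<and> p \<in> open_segment a b)"

definition elim_run :: "pt3 set \<Rightarrow> (nat \<Rightarrow> pt3 set) \<Rightarrow> nat \<Rightarrow> bool" where
  "elim_run K A n \<longleftrightarrow> A 0 = grid K \<and>
     (\<forall>k<n. \<exists>p. fin_extremal (A k) p \<and> p \<notin> K \<and> A (Suc k) = A k - {p}) \<and>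
     {p. fin_extremal (A n) p} \<subseteq> K"

end

theory Submission
  imports Defs
begin

(* An extremal point p of M = A^hv lies in A: inside a horizontal hull it is an extreme
  point of the convex hull of a slice, and inside a vertical prism it must sit at the top or
  bottom, where it again lies in the hull of a slice. Because the algorithm only removes
  points that are not interior to vertical segments of the current set, every column of A^j
  contains all heights of A^j between two of its points; hence the vertical segment between
  two points of A^j in one column is covered by slices and prisms of M, so p is not interior
  to it. Finally the convex hull of the other points of p's slice lies in M, and p is an
  extreme point of it only if it belongs to it. *)

lemma closed_segment_vertical:
  fixes x :: "'a::real_vector" and a b :: "'b::real_vector"
  shows "closed_segment (x, a) (x, b) = {x} \<times> closed_segment a b"
  by (auto simp: in_segment algebra_simps)

lemma open_segment_vertical:
  fixes x :: "'a::real_vector" and a b :: "'b::real_vector"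
  shows "open_segment (x, a) (x, b) = {x} \<times> open_segment a b"
  by (auto simp: open_segment_def closed_segment_vertical)

lemma convex_hull_slice_horizontal: "convex hull (slice A h) \<subseteq> UNIV \<times> {h}"
  by (rule hull_minimal) (auto simp: slice_def convex_Times)

lemma convex_hull_slice_subset_hv_hull: "convex hull (slice A h) \<subseteq> hv_hull A"
proof (cases "slice A h = {}")
  case False
  then have "h \<in> snd ` A" by (force simp: slice_def)
  then show ?thesis unfolding hv_hull_def h_hull_def by blast
qed simp

lemma subset_hv_hull: "A \<subseteq> hv_hull A"
proof
  fix q assume "q \<in> A"
  then have "q \<in> convex hull (slice A (snd q))" by (intro hull_inc) (simp add: slice_def)
  then show "q \<in> hv_hull A" using convex_hull_slice_subset_hv_hull by blast
qed

lemma mem_convex_hull_slice_iff: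
  "(x, h) \<in> convex hull (slice A h) \<longleftrightarrow> x \<in> fst ` (convex hull (slice A h))"
proof
  assume "x \<in> fst ` (convex hull (slice A h))"
  then obtain q where "q \<in> convex hull (slice A h)" "x = fst q" by blast
  moreover have "snd q = h" using subsetD[OF convex_hull_slice_horizontal calculation(1)]
    by (simp add: mem_Times_iff)
  ultimately show "(x, h) \<in> convex hull (slice A h)" by (cases q) simp
qed (metis fst_conv image_eqI)

lemma fst_mem_convex_hull_slice:
  assumes "(x, h) \<in> A"
  shows "x \<in> fst ` (convex hull (slice A h))"
proof -
  have "(x, h) \<in> convex hull (slice A h)" using assms by (intro hull_inc) (simp add: slice_def)
  then show ?thesis by (rule mem_convex_hull_slice_iff[THEN iffD1])
qed

lemma prism_subset_hv_hull:
  assumes "h1 \<in> snd ` A" "h2 \<in> snd ` A" "h1 < h2" "\<not> (\<exists>h\<in>snd ` A. h1 < h \<and> h < h2)"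
    and "x \<in> fst ` (convex hull (slice A h1))" "x \<in> fst ` (convex hull (slice A h2))"
  shows "{x} \<times> {h1..h2} \<subseteq> hv_hull A"
  using assms unfolding hv_hull_def by blast

lemma hv_extremal_horizontal_hull_mem:
  assumes "S \<subseteq> UNIV \<times> {h}" "convex hull S \<subseteq> M" "p \<in> convex hull S" "hv_extremal M p"
  shows "p \<in> S"
proof -
  have horizontal: "convex hull S \<subseteq> UNIV \<times> {h}"
    using assms(1) by (intro hull_minimal) (auto simp: convex_Times)
  have "p extreme_point_of (convex hull S)"
    unfolding extreme_point_of_def
  proof (intro conjI ballI notI)
    fix a b assume ab: "a \<in> convex hull S" "b \<in> convex hull S" "p \<in> open_segment a b"
    have "snd a = snd b" using subsetD[OF horizontal ab(1)] subsetD[OF horizontal ab(2)]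
      by (simp add: mem_Times_iff)
    moreover have "a \<noteq> b" using ab(3) by auto
    moreover have "open_segment a b \<subseteq> M"
      using closed_segment_subset[OF ab(1,2) convex_convex_hull] segment_open_subset_closed assms(2)
      by blast
    ultimately show False using assms(4) ab(3) unfolding hv_extremal_def by blast
  qed fact
  then show ?thesis by (rule extreme_point_of_convex_hull)
qed

lemma hv_extremal_not_in_vertical_open_segment:
  assumes "hv_extremal M p" "fst a = fst b" "open_segment a b \<subseteq> M"
  shows "p \<notin> open_segment a b"
proof
  assume "p \<in> open_segment a b"
  moreover from this have "a \<noteq> b" by auto
  ultimately show False using assms unfolding hv_extremal_def by blast
qed

lemma hv_extremal_convex_hull_slice_mem:
  assumes "hv_extremal (hv_hull A) p" "p \<in> convex hull (slice A h)"
  shows "p \<in> A"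
proof -
  have "slice A h \<subseteq> UNIV \<times> {h}" by (auto simp: slice_def)
  then have "p \<in> slice A h"
    using hv_extremal_horizontal_hull_mem convex_hull_slice_subset_hv_hull assms by blast
  then show ?thesis by (simp add: slice_def)
qed

lemma hv_extremal_hv_hull_mem:
  assumes "hv_extremal (hv_hull A) p"
  shows "p \<in> A"
proof -
  obtain x t where p: "p = (x, t)" by fastforce
  have "p \<in> hv_hull A" using assms unfolding hv_extremal_def by blast
  then consider (horizontal) h where "p \<in> convex hull (slice A h)"
    | (prism) h1 h2 where "h1 \<in> snd ` A" "h2 \<in> snd ` A" "h1 < h2"
        "\<not> (\<exists>h\<in>snd ` A. h1 < h \<and> h < h2)"
        "x \<in> fst ` (convex hull (slice A h1))" "x \<in> fst ` (convex hull (slice A h2))"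
        "t \<in> {h1..h2}"
    unfolding hv_hull_def h_hull_def p by blast
  then show ?thesis
  proof cases
    case horizontal
    then show ?thesis using assms hv_extremal_convex_hull_slice_mem by blast
  next
    case prism
    have "open_segment (x, h1) (x, h2) \<subseteq> hv_hull A"
      using prism_subset_hv_hull[OF prism(1-6)] prism(3)
      by (auto simp: open_segment_vertical open_segment_eq_real_ivl)
    then have "p \<notin> open_segment (x, h1) (x, h2)"
      using hv_extremal_not_in_vertical_open_segment[OF assms] by simp
    then have "t \<notin> open_segment h1 h2" by (simp add: p open_segment_vertical)
    then have "t = h1 \<or> t = h2"
      using prism(3,7) by (auto simp: open_segment_eq_real_ivl)
    then have "p \<in> convex hull (slice A t)"
      using prism(5,6) mem_convex_hull_slice_iff p by blast
    then show ?thesis using assms hv_extremal_convex_hull_slice_mem by blast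
  qed
qed

definition vertically_saturated :: "pt3 set \<Rightarrow> bool" where
  "vertically_saturated A \<longleftrightarrow> (\<forall>x h1 h2 h. (x, h1) \<in> A \<longrightarrow> (x, h2) \<in> A \<longrightarrow>
     h \<in> snd ` A \<longrightarrow> h1 \<le> h \<longrightarrow> h \<le> h2 \<longrightarrow> (x, h) \<in> A)"

lemma vertically_saturatedD:
  "vertically_saturated A \<Longrightarrow> (x, h1) \<in> A \<Longrightarrow> (x, h2) \<in> A \<Longrightarrow> h \<in> snd ` A \<Longrightarrow>
    h1 \<le> h \<Longrightarrow> h \<le> h2 \<Longrightarrow> (x, h) \<in> A"
  unfolding vertically_saturated_def by blast

lemma column_subset_hv_hull:
  assumes "finite (snd ` A)" "vertically_saturated A" "(x, h1) \<in> A" "(x, h2) \<in> A"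
    and "h1 \<le> s" "s \<le> h2"
  shows "(x, s) \<in> hv_hull A"
proof (cases "s \<in> snd ` A")
  case True
  then have "(x, s) \<in> A" by (rule vertically_saturatedD[OF assms(2-4) _ assms(5,6)])
  then show ?thesis using subset_hv_hull by blast
next
  case False
  \<comment> \<open>then s lies strictly between two consecutive heights of A, which span a prism over x\<close>
  define below where "below = {h \<in> snd ` A. h \<le> s}"
  define above where "above = {h \<in> snd ` A. s \<le> h}"
  have h12: "h1 \<in> below" "h2 \<in> above" and fin: "finite below" "finite above"
    using assms unfolding below_def above_def by force+
  then have "Max below \<in> below" "Min above \<in> above" by (auto intro: Max_in Min_in)
  then have lo: "Max below \<in> snd ` A" "h1 \<le> Max below" "Max below \<le> s"
    and hi: "Min above \<in> snd ` A" "Min above \<le> h2" "s \<le> Min above"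
    using h12 fin by (auto simp: below_def above_def)
  have "h \<le> Max below \<or> Min above \<le> h" if "h \<in> snd ` A" for h
    using that fin by (cases "h \<le> s") (auto simp: below_def above_def)
  then have gap: "\<not> (\<exists>h\<in>snd ` A. Max below < h \<and> h < Min above)" by force
  have "(x, Max below) \<in> A" "(x, Min above) \<in> A"
    using vertically_saturatedD[OF assms(2-4)] lo hi assms(5,6) by auto
  then have "x \<in> fst ` (convex hull (slice A (Max below)))"
    "x \<in> fst ` (convex hull (slice A (Min above)))"
    by (blast intro: fst_mem_convex_hull_slice)+
  moreover have "Max below \<noteq> s" using False lo(1) by blast
  then have "Max below < Min above" using lo(3) hi(3) by linarith
  ultimately have "{x} \<times> {Max below..Min above} \<subseteq> hv_hull A"
    using prism_subset_hv_hull[OF lo(1) hi(1) _ gap] by blast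
  then show ?thesis using lo(3) hi(3) by auto
qed

lemma vertical_segment_subset_hv_hull:
  assumes "finite (snd ` A)" "vertically_saturated A" "a \<in> A" "b \<in> A" "fst a = fst b"
  shows "closed_segment a b \<subseteq> hv_hull A"
proof
  fix q assume q: "q \<in> closed_segment a b"
  obtain x h1 h2 where ab: "a = (x, h1)" "b = (x, h2)" using assms(5) by (metis prod.collapse)
  then obtain s where s: "q = (x, s)" "s \<in> closed_segment h1 h2"
    using q by (auto simp: closed_segment_vertical)
  consider "h1 \<le> s" "s \<le> h2" | "h2 \<le> s" "s \<le> h1"
    using s(2) by (auto simp: closed_segment_eq_real_ivl split: if_splits)
  then show "q \<in> hv_hull A"
    using column_subset_hv_hull[OF assms(1,2)] assms(3,4) unfolding ab s by cases blast+
qed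

lemma hv_extremal_not_in_vertical_segment:
  assumes "finite (snd ` A)" "vertically_saturated A" "hv_extremal (hv_hull A) p"
  shows "\<not> (\<exists>p1\<in>A. \<exists>p2\<in>A. fst p1 = fst p2 \<and> p \<in> open_segment p1 p2)"
proof clarify
  fix p1 p2 assume "p1 \<in> A" "p2 \<in> A" "fst p1 = fst p2" "p \<in> open_segment p1 p2"
  moreover from calculation have "open_segment p1 p2 \<subseteq> hv_hull A"
    using vertical_segment_subset_hv_hull[OF assms(1,2)] segment_open_subset_closed by blast
  ultimately show False using hv_extremal_not_in_vertical_open_segment[OF assms(3)] by blast
qed

lemma hv_extremal_not_in_hull_of_level_points:
  assumes "hv_extremal (hv_hull A) p"
  shows "p \<notin> convex hull {q \<in> A - {p}. snd q = snd p}"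
proof
  let ?S = "{q \<in> A - {p}. snd q = snd p}"
  assume "p \<in> convex hull ?S"
  moreover have "?S \<subseteq> UNIV \<times> {snd p}" by auto
  moreover have "convex hull ?S \<subseteq> convex hull (slice A (snd p))"
    by (rule hull_mono) (auto simp: slice_def)
  then have "convex hull ?S \<subseteq> hv_hull A"
    using convex_hull_slice_subset_hv_hull by (rule subset_trans)
  ultimately have "p \<in> ?S" using hv_extremal_horizontal_hull_mem assms by blast
  then show False by simp
qed

lemma fin_extremal_if_hv_extremal_hv_hull:
  assumes "finite (snd ` A)" "vertically_saturated A" "hv_extremal (hv_hull A) p"
  shows "fin_extremal A p"
  unfolding fin_extremal_def
  using hv_extremal_hv_hull_mem[OF assms(3)] hv_extremal_not_in_vertical_segment[OF assms]
    hv_extremal_not_in_hull_of_level_points[OF assms(3)]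
  by blast

lemma vertically_saturated_grid: "vertically_saturated (grid K)"
  unfolding vertically_saturated_def grid_def by auto

lemma vertically_saturated_Diff:
  assumes "vertically_saturated A"
    and "\<not> (\<exists>p1\<in>A. \<exists>p2\<in>A. fst p1 = fst p2 \<and> p \<in> open_segment p1 p2)"
  shows "vertically_saturated (A - {p})"
  unfolding vertically_saturated_def
proof (intro allI impI)
  fix x h1 h2 h
  assume h1: "(x, h1) \<in> A - {p}" and h2: "(x, h2) \<in> A - {p}" and h: "h \<in> snd ` (A - {p})"
    and "h1 \<le> h" "h \<le> h2"
  then have "(x, h) \<in> A" using vertically_saturatedD[OF assms(1)] by blast
  moreover have "(x, h) \<noteq> p"
  proof
    assume "(x, h) = p"
    with h1 h2 \<open>h1 \<le> h\<close> \<open>h \<le> h2\<close> have "h1 < h" "h < h2" by auto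
    then have "p \<in> open_segment (x, h1) (x, h2)"
      using \<open>(x, h) = p\<close> by (auto simp: open_segment_vertical open_segment_eq_real_ivl)
    with h1 h2 assms(2) show False by force
  qed
  ultimately show "(x, h) \<in> A - {p}" by blast
qed

lemma elim_run_step:
  assumes "elim_run K A n" "k < n"
  obtains p where "fin_extremal (A k) p" "A (Suc k) = A k - {p}"
  using assms unfolding elim_run_def by blast

lemma elim_run_subset_grid:
  assumes "elim_run K A n" "k \<le> n"
  shows "A k \<subseteq> grid K"
  using assms(2)
proof (induction k)
  case 0
  then show ?case using assms(1) unfolding elim_run_def by simp
next
  case (Suc k)
  then obtain p where "A (Suc k) = A k - {p}"
    using elim_run_step[OF assms(1)] by (metis Suc_le_lessD)
  with Suc show ?case by auto
qed

lemma elim_run_vertically_saturated: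
  assumes "elim_run K A n" "k \<le> n"
  shows "vertically_saturated (A k)"
  using assms(2)
proof (induction k)
  case 0
  then show ?case using assms(1) vertically_saturated_grid unfolding elim_run_def by simp
next
  case (Suc k)
  then obtain p where "fin_extremal (A k) p" "A (Suc k) = A k - {p}"
    using elim_run_step[OF assms(1)] by (metis Suc_le_lessD)
  moreover have "vertically_saturated (A k)" using Suc by simp
  ultimately show ?case using vertically_saturated_Diff unfolding fin_extremal_def by simp
qed

lemma finite_heights_grid: "finite K \<Longrightarrow> finite (snd ` grid K)"
  unfolding grid_def grid_H_def by (rule finite_subset[of _ "snd ` K"]) auto

theorem lemma5p12:
  fixes K :: "pt3 set" and A :: "nat \<Rightarrow> pt3 set" and n :: nat
  assumes "finite K"
    and "elim_run K A n"
    and "j \<le> n"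
    and "hv_extremal (hv_hull (A j)) p"
  shows "fin_extremal (A j) p"
proof (rule fin_extremal_if_hv_extremal_hv_hull)
  show "finite (snd ` A j)"
    using elim_run_subset_grid[OF assms(2,3)] finite_heights_grid[OF assms(1)]
    by (meson finite_subset image_mono)
  show "vertically_saturated (A j)" using assms(2,3) by (rule elim_run_vertically_saturated)
qed fact

end
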